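(* Let $p$ be an odd prime and $M$ the sub-add move matrix. (a) If $p\equiv3\pmod8$ or $p\equiv7\pmod8$, then $\Gamma_{M,\,p}$ has no secondary cycles. (b) If $p\equiv5\pmod8$, then $\Gamma_{M,\,p}$ has secondary cycles.
   Context: The sub-add move matrix is $M=\begin{pmatrix}1&-1\\1&1\end{pmatrix}$. $\Gamma_{M,\,p}$ is the directed graph with vertex set $\mathbb Z_p^2$ and arcs $((a,b),(a-b,a+b))$ (mod $p$; loops allowed). Let $k$ be the $\mathbb Z_p$-order of $M$ (least positive integer with $M^k\equiv I\pmod p$; it equals $4t$ with $t$ the multiplicative order of $-4$ in $GF(p)$). A directed cycle is a cycle in the underlying undirected graph such that in the induced directed subgraph every vertex has in- and out-degree $1$; a loop is a directed $1$-cycle. A primary cycle is a directed cycle of length $k$; a secondary cycle is a directed cycle that is neither primary nor a $1$-cycle. *)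

theory Defs
  imports "HOL-Computational_Algebra.Primes" "HOL-Number_Theory.Cong" "Jordan_Normal_Form.Matrix"
begin

definition subadd_M :: "int mat" where
  "subadd_M = mat_of_rows_list 2 [[1, -1], [1, 1]]"

definition subadd_order :: "nat \<Rightarrow> nat" where
  "subadd_order p = (LEAST k. k > 0 \<and>
     (\<forall>i<2. \<forall>j<2. [(subadd_M ^\<^sub>m k) $$ (i, j) = (1\<^sub>m 2 :: int mat) $$ (i, j)] (mod int p)))"

text \<open>Vertex set Z_p^2, represented by pairs of canonical residues 0..p-1.\<close>
definition verts :: "nat \<Rightarrow> (int \<times> int) set" where
  "verts p = {0..<int p} \<times> {0..<int p}"

definition arc :: "nat \<Rightarrow> int \<times> int \<Rightarrow> int \<times> int \<Rightarrow> bool" where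
  "arc p u v \<longleftrightarrow> u \<in> verts p \<and>
     v = ((fst u - snd u) mod int p, (fst u + snd u) mod int p)"

definition directed_cycle :: "nat \<Rightarrow> (int \<times> int) list \<Rightarrow> bool" where
  "directed_cycle p cs \<longleftrightarrow> cs \<noteq> [] \<and> distinct cs \<and> set cs \<subseteq> verts p \<and>
     (\<forall>i < length cs. arc p (cs ! i) (cs ! ((i + 1) mod length cs))) \<and>
     (\<forall>v \<in> set cs. card {w \<in> set cs. arc p v w} = 1 \<and> card {u \<in> set cs. arc p u v} = 1)"

definition primary_cycle :: "nat \<Rightarrow> (int \<times> int) list \<Rightarrow> bool" where
  "primary_cycle p cs \<longleftrightarrow> directed_cycle p cs \<and> length cs = subadd_order p"

definition secondary_cycle :: "nat \<Rightarrow> (int \<times> int) list \<Rightarrow> bool" where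
  "secondary_cycle p cs \<longleftrightarrow> directed_cycle p cs \<and> \<not> primary_cycle p cs \<and> length cs \<noteq> 1"

end

theory Submission
  imports Defs "HOL-Number_Theory.Number_Theory" "HOL-Combinatorics.Orbits"
begin

text \<open>The arc map \<open>(a, b) \<mapsto> (a - b, a + b)\<close> is multiplication by \<open>1 + i\<close> on
  \<open>\<int>\<^sub>p[i]\<close>, so every directed cycle is an orbit of this map and its length is the period of
  any of its vertices. The origin has period 1, and all periods are at most the order \<open>k\<close> of
  \<open>M\<close>.

  If \<open>p \<equiv> 3 (mod 4)\<close>, then \<open>-1\<close> is not a square, so \<open>\<int>\<^sub>p[i]\<close> is a field: a nonzero vertex
  fixed by \<open>M\<^sup>n\<close> forces \<open>M\<^sup>n \<equiv> I\<close>. Hence every nonzero vertex has period exactly \<open>k\<close>, and only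
  loops and primary cycles exist.

  If \<open>p \<equiv> 5 (mod 8)\<close>, pick \<open>c\<close> with \<open>c\<^sup>2 \<equiv> -1\<close>; then \<open>(1, -c)\<close> and \<open>(1, c)\<close> are eigenvectors
  of \<open>M\<close> with eigenvalues \<open>1 + c\<close> and \<open>1 - c\<close>. Write \<open>h = (p - 1)/2\<close>. Since
  \<open>(1 - c)\<^sup>2 \<equiv> -(1 + c)\<^sup>2\<close> and \<open>h/2\<close> is odd, \<open>(1 - c)\<^sup>h \<equiv> -(1 + c)\<^sup>h \<equiv> \<minusplus>1\<close>; choose the
  sign of \<open>c\<close> with \<open>(1 + c)\<^sup>h \<equiv> 1\<close>. The period of \<open>(1, -c)\<close> then divides \<open>h\<close>, whereas \<open>k\<close>
  does not, because \<open>M\<^sup>k = I\<close> gives \<open>(1 - c)\<^sup>k \<equiv> 1\<close>. As the period is not 1 either, the orbit of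
  \<open>(1, -c)\<close> is a secondary cycle.\<close>

section \<open>Periodic points and cycles of a map\<close>

definition fun_cycle :: "('a \<Rightarrow> 'a) \<Rightarrow> 'a list \<Rightarrow> bool" where
  "fun_cycle f cs \<longleftrightarrow> cs \<noteq> [] \<and> distinct cs \<and>
     (\<forall>i < length cs. cs ! ((i + 1) mod length cs) = f (cs ! i))"

lemma funpow_fixed_in_orbit:
  assumes "(f ^^ n) x = x" and "0 < n"
  shows "x \<in> orbit f x"
  using assms unfolding orbit_altdef by force

lemma funpow_dist1_dvd:
  assumes "(f ^^ n) x = x"
  shows "funpow_dist1 f x x dvd n"
proof (cases "n = 0")
  case False
  let ?d = "funpow_dist1 f x x"
  have orb: "x \<in> orbit f x"
    using assms False by (simp add: funpow_fixed_in_orbit)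
  have "(f ^^ (n mod ?d)) x = x"
    using funpow_mod_eq[OF funpow_dist1_prop[OF orb]] assms by simp
  moreover have "n mod ?d < ?d"
    by simp
  ultimately have "n mod ?d = 0"
    using funpow_dist1_least by (metis neq0_conv)
  then show ?thesis
    by (rule mod_0_imp_dvd)
qed simp

lemma funpow_fixed_dvd:
  assumes "(f ^^ k) x = x" and "k dvd n"
  shows "(f ^^ n) x = x"
  using funpow_mod_eq[OF assms(1), of n] assms(2) by simp

lemma fun_cycle_step:
  assumes "fun_cycle f cs" and "i < length cs"
  shows "cs ! ((i + 1) mod length cs) = f (cs ! i)"
  using assms unfolding fun_cycle_def by blast

lemma fun_cycle_nth:
  assumes "fun_cycle f cs" and "i < length cs"
  shows "cs ! i = (f ^^ i) (cs ! 0)"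
  using assms(2)
proof (induction i)
  case (Suc i)
  then show ?case
    using fun_cycle_step[OF assms(1), of i] by simp
qed simp

lemma fun_cycle_length:
  assumes cyc: "fun_cycle f cs"
  shows "length cs = funpow_dist1 f (cs ! 0) (cs ! 0)"
proof -
  let ?x = "cs ! 0" and ?n = "length cs"
  obtain m where m: "?n = Suc m"
    using cyc unfolding fun_cycle_def by (cases cs) auto
  have "(f ^^ ?n) ?x = f (cs ! m)"
    using fun_cycle_nth[OF cyc, of m] m by simp
  also have "\<dots> = ?x"
    using fun_cycle_step[OF cyc, of m] m by simp
  finally have returns: "(f ^^ ?n) ?x = ?x" .
  then have orb: "?x \<in> orbit f ?x"
    by (rule funpow_fixed_in_orbit) (simp add: m)
  have le: "funpow_dist1 f ?x ?x \<le> ?n"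
    using funpow_dist1_le_self[OF returns _ orb] m by simp
  have "\<not> funpow_dist1 f ?x ?x < ?n"
  proof
    assume less: "funpow_dist1 f ?x ?x < ?n"
    then have "cs ! funpow_dist1 f ?x ?x = cs ! 0"
      using fun_cycle_nth[OF cyc] funpow_dist1_prop[OF orb] by simp
    then show False
      using cyc less unfolding fun_cycle_def by (simp add: nth_eq_iff_index_eq)
  qed
  then show ?thesis
    using le by simp
qed

lemma fun_cycle_orbit:
  assumes orb: "x \<in> orbit f x"
  shows "fun_cycle f (map (\<lambda>j. (f ^^ j) x) [0..<funpow_dist1 f x x])"
proof -
  define d where "d = funpow_dist1 f x x"
  have "inj_on (\<lambda>j. (f ^^ j) x) {0..<d}"
    using inj_on_funpow_dist1[OF orb] unfolding d_def .
  then have "distinct (map (\<lambda>j. (f ^^ j) x) [0..<d])"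
    by (simp add: distinct_map)
  moreover have "(f ^^ ((i + 1) mod d)) x = f ((f ^^ i) x)" for i
    using funpow_mod_eq[OF funpow_dist1_prop[OF orb]] unfolding d_def by simp
  moreover have "0 < d"
    unfolding d_def by simp
  ultimately show ?thesis
    unfolding fun_cycle_def d_def[symmetric] by simp
qed

lemma fun_cycle_bij_betw:
  assumes cyc: "fun_cycle f cs"
  shows "bij_betw f (set cs) (set cs)"
proof -
  let ?n = "length cs"
  have "cs ! j \<in> f ` set cs" if "j < ?n" for j
  proof -
    define i where "i = (if j = 0 then ?n - 1 else j - 1)"
    have i: "i < ?n" "(i + 1) mod ?n = j"
      using that unfolding i_def by auto
    then have "cs ! j = f (cs ! i)"
      using fun_cycle_step[OF cyc, of i] by simp
    then show ?thesis
      using i by simp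
  qed
  moreover have "f (cs ! i) \<in> set cs" if "i < ?n" for i
  proof -
    have "(i + 1) mod ?n < ?n"
      using that by (intro mod_less_divisor) linarith
    then show ?thesis
      unfolding fun_cycle_step[OF cyc that, symmetric] by (rule nth_mem)
  qed
  ultimately have img: "f ` set cs = set cs"
    by (fastforce simp: in_set_conv_nth)
  then show ?thesis
    unfolding bij_betw_def by (simp add: finite_surj_inj)
qed

section \<open>Square roots of \<open>-1\<close> modulo a prime\<close>

lemma fermat_theorem_int:
  assumes "prime p" and "\<not> int p dvd a"
  shows "[a ^ (p - 1) = 1] (mod int p)"
proof -
  define b where "b = nat (a mod int p)"
  have b: "int b = a mod int p"
    using assms(1) unfolding b_def by (simp add: prime_gt_0_nat)
  have "\<not> p dvd b"
    using assms(2) b by (metis int_dvd_int_iff dvd_mod_iff dvd_refl)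
  then have "[b ^ (p - 1) = 1] (mod p)"
    by (rule fermat_theorem[OF assms(1)])
  then have "[int b ^ (p - 1) = 1] (mod int p)"
    by (metis cong_int_iff of_nat_1 of_nat_power)
  then show ?thesis
    unfolding b by (simp add: cong_def power_mod)
qed

lemma one_not_cong_minus_one:
  assumes "2 < m"
  shows "\<not> [1 = -1] (mod int m)"
proof
  assume "[1 = -1] (mod int m)"
  then have "int m dvd 2"
    by (simp add: cong_iff_dvd_diff)
  then show False
    using assms zdvd_imp_le[of "int m" 2] by simp
qed

lemma sqrt_minus_one_not_cong:
  assumes "[c ^ 2 = -1] (mod int m)" and "2 < m"
  shows "\<not> [c = 0] (mod int m)" and "\<not> [c = -1] (mod int m)"
proof -
  have "\<not> [-1 = 0 ^ 2] (mod int m)"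
    using assms(2) by (auto simp: cong_iff_dvd_diff dest: zdvd_imp_le)
  moreover have "\<not> [-1 = (-1) ^ 2] (mod int m)"
    using one_not_cong_minus_one[OF assms(2)] by (simp add: cong_sym_eq)
  ultimately show "\<not> [c = 0] (mod int m)" and "\<not> [c = -1] (mod int m)"
    using assms(1) by (metis cong_pow cong_sym cong_trans)+
qed

lemma power_half_cong_one_or_minus_one:
  assumes "prime p" and "2 < p" and "\<not> int p dvd a"
  shows "[a ^ ((p - 1) div 2) = 1] (mod int p) \<or> [a ^ ((p - 1) div 2) = -1] (mod int p)"
proof -
  have "\<not> [a = 0] (mod int p)"
    using assms(3) by (simp add: cong_0_iff)
  then show ?thesis
    using euler_criterion[OF assms(1,2), of a] by (auto simp: Legendre_def cong_sym_eq split: if_splits)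
qed

lemma QuadRes_minus_one_iff:
  assumes "prime p" and "2 < p"
  shows "QuadRes (int p) (-1) \<longleftrightarrow> p mod 4 = 1"
proof -
  have euler: "[Legendre (-1) (int p) = (-1) ^ ((p - 1) div 2)] (mod int p)"
    by (rule euler_criterion[OF assms])
  have "odd p"
    using assms prime_odd_nat by blast
  then have power: "(-1 :: int) ^ ((p - 1) div 2) = (if p mod 4 = 1 then 1 else -1)"
    by (auto simp: minus_one_power_iff) presburger+
  have nonzero: "\<not> [-1 = 0] (mod int p)"
    using assms by (auto simp: cong_0_iff prime_gt_1_nat)
  show ?thesis
  proof (cases "QuadRes (int p) (-1)")
    case True
    then have "[1 = (-1) ^ ((p - 1) div 2)] (mod int p)"
      using euler nonzero by (simp add: Legendre_def)
    then show ?thesis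
      using True power one_not_cong_minus_one[OF assms(2)] by (auto split: if_splits)
  next
    case False
    then have "[-1 = (-1) ^ ((p - 1) div 2)] (mod int p)"
      using euler nonzero by (simp add: Legendre_def)
    then show ?thesis
      using False power one_not_cong_minus_one[OF assms(2)] by (auto split: if_splits dest: cong_sym)
  qed
qed

lemma prime_dvd_sum_of_squares:
  fixes u w :: int
  assumes "prime p" and "p mod 4 = 3" and "int p dvd u ^ 2 + w ^ 2"
  shows "int p dvd w"
proof (rule ccontr)
  assume "\<not> int p dvd w"
  moreover have "prime (int p)"
    using assms(1) by simp
  ultimately have "coprime w (int p)"
    by (metis prime_imp_coprime coprime_commute)
  then obtain w' where w': "[w * w' = 1] (mod int p)"
    using cong_solve_coprime_int by blast
  have "[u ^ 2 = - (w ^ 2)] (mod int p)"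
    using assms(3) by (simp add: cong_iff_dvd_diff)
  then have "[(u * w') ^ 2 = - ((w * w') ^ 2)] (mod int p)"
    using cong_mult[OF _ cong_refl, of "u ^ 2" "- (w ^ 2)" "int p" "w' ^ 2"]
    by (simp add: power_mult_distrib)
  moreover have "[- ((w * w') ^ 2) = - (1 ^ 2)] (mod int p)"
    using w' by (intro cong_uminus cong_pow)
  ultimately have "QuadRes (int p) (-1)"
    unfolding QuadRes_def by (auto dest: cong_trans)
  moreover have "2 < p"
    using assms(1,2) prime_ge_2_nat[OF assms(1)] by presburger
  ultimately show False
    using QuadRes_minus_one_iff[OF assms(1)] assms(2) by simp
qed

lemma opposite_powers_one_plus_minus_sqrt:
  fixes c m :: int
  assumes "[c ^ 2 = -1] (mod m)" and "odd k"
  shows "[(1 - c) ^ (2 * k) = - ((1 + c) ^ (2 * k))] (mod m)"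
proof -
  have "(1 - c) ^ 2 = - ((1 + c) ^ 2) + 2 * (c ^ 2 + 1)"
    by (simp add: algebra_simps power2_eq_square)
  moreover have "[- ((1 + c) ^ 2) + 2 * (c ^ 2 + 1) = - ((1 + c) ^ 2) + 2 * 0] (mod m)"
    using assms(1) by (intro cong_add cong_mult cong_refl) (simp add: cong_iff_dvd_diff)
  ultimately have "[((1 - c) ^ 2) ^ k = (- ((1 + c) ^ 2)) ^ k] (mod m)"
    by (intro cong_pow) simp
  then show ?thesis
    using assms(2) by (simp add: power_mult)
qed

lemma exists_sqrt_minus_one_with_opposite_powers:
  assumes "prime p" and "p mod 8 = 5"
  obtains c :: int where "[c ^ 2 = -1] (mod int p)"
    and "[(1 + c) ^ ((p - 1) div 2) = 1] (mod int p)"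
    and "[(1 - c) ^ ((p - 1) div 2) = -1] (mod int p)"
proof -
  have "2 < p" and "p mod 4 = 1" and "odd ((p - 1) div 4)"
    and half: "(p - 1) div 2 = 2 * ((p - 1) div 4)"
    using assms(2) by presburger+
  then obtain c0 where c0: "[c0 ^ 2 = -1] (mod int p)"
    using QuadRes_minus_one_iff[OF assms(1)] unfolding QuadRes_def by blast
  have opposite: "[(1 - c0) ^ ((p - 1) div 2) = - ((1 + c0) ^ ((p - 1) div 2))] (mod int p)"
    unfolding half by (rule opposite_powers_one_plus_minus_sqrt[OF c0 \<open>odd ((p - 1) div 4)\<close>])
  have "\<not> int p dvd 1 + c0"
    using sqrt_minus_one_not_cong(2)[OF c0 \<open>2 < p\<close>] by (simp add: cong_iff_dvd_diff add.commute)
  then consider (plus) "[(1 + c0) ^ ((p - 1) div 2) = 1] (mod int p)"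
    | (minus) "[(1 + c0) ^ ((p - 1) div 2) = -1] (mod int p)"
    using power_half_cong_one_or_minus_one[OF assms(1) \<open>2 < p\<close>] by blast
  then show thesis
  proof cases
    case plus
    then have "[(1 - c0) ^ ((p - 1) div 2) = -1] (mod int p)"
      using opposite by (metis cong_trans cong_uminus)
    then show thesis
      using that[of c0] c0 plus by blast
  next
    case minus
    then have "[(1 - c0) ^ ((p - 1) div 2) = 1] (mod int p)"
      using opposite by (metis cong_trans cong_uminus minus_minus)
    then show thesis
      using that[of "- c0"] c0 minus by simp
  qed
qed

section \<open>Powers of \<open>M\<close>\<close>

fun one_plus_i_pow :: "nat \<Rightarrow> int \<times> int" where
  "one_plus_i_pow 0 = (1, 0)"
| "one_plus_i_pow (Suc n) =
     (fst (one_plus_i_pow n) - snd (one_plus_i_pow n), fst (one_plus_i_pow n) + snd (one_plus_i_pow n))"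

lemma subadd_M_pow:
  "subadd_M ^\<^sub>m n = mat 2 2 (\<lambda>(i, j). if i = j then fst (one_plus_i_pow n)
     else if i = 0 then - snd (one_plus_i_pow n) else snd (one_plus_i_pow n))"
proof (induction n)
  case 0
  show ?case
    by (auto simp: subadd_M_def mat_of_rows_list_def)
next
  case (Suc n)
  show ?case
    unfolding pow_mat.simps Suc.IH
    by (rule eq_matI)
      (auto simp: subadd_M_def mat_of_rows_list_def scalar_prod_def numeral_2_eq_2 less_Suc_eq)
qed

definition subadd_M_pow_cong_one :: "nat \<Rightarrow> nat \<Rightarrow> bool" where
  "subadd_M_pow_cong_one p n \<longleftrightarrow>
     [fst (one_plus_i_pow n) = 1] (mod int p) \<and> [snd (one_plus_i_pow n) = 0] (mod int p)"

lemma subadd_order_eq_Least: "subadd_order p = (LEAST n. 0 < n \<and> subadd_M_pow_cong_one p n)"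
proof -
  have "(\<forall>i<2. \<forall>j<2. [(subadd_M ^\<^sub>m n) $$ (i, j) = (1\<^sub>m 2 :: int mat) $$ (i, j)] (mod int p))
      \<longleftrightarrow> subadd_M_pow_cong_one p n" for n
    by (auto simp: subadd_M_pow subadd_M_pow_cong_one_def numeral_2_eq_2 less_Suc_eq cong_0_iff)
  then show ?thesis
    unfolding subadd_order_def by simp
qed

lemma subadd_order_le:
  assumes "0 < n" and "subadd_M_pow_cong_one p n"
  shows "subadd_order p \<le> n"
  unfolding subadd_order_eq_Least using assms by (intro Least_le) simp

lemma one_plus_i_pow_mult_4: "one_plus_i_pow (4 * j) = ((-4) ^ j, 0)"
proof (induction j)
  case (Suc j)
  have four_steps: "one_plus_i_pow (Suc (Suc (Suc (Suc n)))) =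
      (-4 * fst (one_plus_i_pow n), -4 * snd (one_plus_i_pow n))" for n
    by simp
  have four_j: "4 * Suc j = Suc (Suc (Suc (Suc (4 * j))))"
    by simp
  show ?case
    unfolding four_j four_steps Suc.IH by simp
qed simp

lemma subadd_order_works:
  assumes "prime p" and "odd p"
  shows "0 < subadd_order p" and "subadd_M_pow_cong_one p (subadd_order p)"
proof -
  have "2 < p"
    using prime_ge_2_nat[OF assms(1)] assms(2) by presburger
  have "\<not> int p dvd -4"
  proof
    assume "int p dvd -4"
    then have "p dvd 4"
      by (metis dvd_minus_iff int_dvd_int_iff of_nat_numeral)
    moreover from this have "p \<le> 4"
      by (rule dvd_imp_le) simp
    then have "p = 3"
      using \<open>2 < p\<close> assms(2) by presburger
    ultimately show False
      by simp
  qed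
  then have "subadd_M_pow_cong_one p (4 * (p - 1))"
    using fermat_theorem_int[OF assms(1)] by (simp add: subadd_M_pow_cong_one_def one_plus_i_pow_mult_4)
  moreover have "0 < 4 * (p - 1)"
    using \<open>2 < p\<close> by simp
  ultimately have "\<exists>n. 0 < n \<and> subadd_M_pow_cong_one p n"
    by blast
  from LeastI_ex[OF this] show "0 < subadd_order p" and "subadd_M_pow_cong_one p (subadd_order p)"
    unfolding subadd_order_eq_Least by auto
qed

lemma one_plus_i_pow_eigenvalue:
  fixes c m :: int
  assumes "[c ^ 2 = -1] (mod m)"
  shows "[fst (one_plus_i_pow n) + c * snd (one_plus_i_pow n) = (1 + c) ^ n] (mod m)"
proof (induction n)
  case (Suc n)
  obtain x y where xy: "one_plus_i_pow n = (x, y)"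
    by fastforce
  have "(x - y) + c * (x + y) = (1 + c) * (x + c * y) - y * (c ^ 2 + 1)"
    by (simp add: algebra_simps power2_eq_square)
  moreover have "[(1 + c) * (x + c * y) - y * (c ^ 2 + 1) = (1 + c) * (1 + c) ^ n - y * 0] (mod m)"
    using Suc xy assms by (intro cong_diff cong_mult cong_refl) (auto simp: cong_iff_dvd_diff)
  ultimately show ?case
    using xy by simp
qed simp

section \<open>Cycles as orbits of the arc map\<close>

definition subadd_step :: "nat \<Rightarrow> int \<times> int \<Rightarrow> int \<times> int" where
  "subadd_step p u = ((fst u - snd u) mod int p, (fst u + snd u) mod int p)"

lemma arc_iff_subadd_step: "arc p u v \<longleftrightarrow> u \<in> verts p \<and> v = subadd_step p u"
  unfolding arc_def subadd_step_def by simp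

lemma directed_cycle_iff_fun_cycle:
  "directed_cycle p cs \<longleftrightarrow> set cs \<subseteq> verts p \<and> fun_cycle (subadd_step p) cs"
proof
  assume "directed_cycle p cs"
  then show "set cs \<subseteq> verts p \<and> fun_cycle (subadd_step p) cs"
    unfolding directed_cycle_def fun_cycle_def arc_iff_subadd_step by auto
next
  assume "set cs \<subseteq> verts p \<and> fun_cycle (subadd_step p) cs"
  then have sub: "set cs \<subseteq> verts p" and cyc: "fun_cycle (subadd_step p) cs"
    by auto
  have bij: "bij_betw (subadd_step p) (set cs) (set cs)"
    by (rule fun_cycle_bij_betw[OF cyc])
  have degrees: "card {w \<in> set cs. arc p v w} = 1 \<and> card {u \<in> set cs. arc p u v} = 1"
    if v: "v \<in> set cs" for v
  proof -
    have "{w \<in> set cs. arc p v w} = {subadd_step p v}"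
      using v sub bij_betw_apply[OF bij v] by (auto simp: arc_iff_subadd_step)
    moreover obtain u where u: "u \<in> set cs" "subadd_step p u = v"
      using bij v by (metis bij_betw_imp_surj_on imageE)
    have "{u' \<in> set cs. arc p u' v} = {u}"
      using u sub bij_betw_imp_inj_on[OF bij] by (auto simp: arc_iff_subadd_step dest: inj_onD)
    ultimately show ?thesis
      by simp
  qed
  have "\<forall>i < length cs. arc p (cs ! i) (cs ! ((i + 1) mod length cs))"
    using sub fun_cycle_step[OF cyc] by (auto simp: arc_iff_subadd_step)
  then show "directed_cycle p cs"
    using cyc sub degrees unfolding directed_cycle_def fun_cycle_def by blast
qed

lemma funpow_subadd_step:
  assumes "(a, b) \<in> verts p"
  shows "(subadd_step p ^^ n) (a, b) =
    ((fst (one_plus_i_pow n) * a - snd (one_plus_i_pow n) * b) mod int p,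
     (snd (one_plus_i_pow n) * a + fst (one_plus_i_pow n) * b) mod int p)"
proof (induction n)
  case 0
  then show ?case
    using assms by (simp add: verts_def)
next
  case (Suc n)
  obtain x y where xy: "one_plus_i_pow n = (x, y)"
    by fastforce
  have "(subadd_step p ^^ Suc n) (a, b) = subadd_step p ((x * a - y * b) mod int p, (y * a + x * b) mod int p)"
    using Suc xy by simp
  also have "\<dots> = (((x - y) * a - (x + y) * b) mod int p, ((x + y) * a + (x - y) * b) mod int p)"
    unfolding subadd_step_def by (simp add: mod_diff_eq mod_add_eq algebra_simps)
  finally show ?case
    using xy by simp
qed

lemma subadd_step_in_verts:
  assumes "0 < p"
  shows "subadd_step p u \<in> verts p"
  using assms by (simp add: subadd_step_def verts_def)

lemma funpow_subadd_step_in_verts: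
  assumes "u \<in> verts p"
  shows "(subadd_step p ^^ n) u \<in> verts p"
proof -
  have "0 < p"
    using assms by (auto simp: verts_def)
  then show ?thesis
    using assms by (induction n) (simp_all add: subadd_step_in_verts)
qed

lemma funpow_subadd_step_fixes_verts:
  assumes "subadd_M_pow_cong_one p n" and "u \<in> verts p"
  shows "(subadd_step p ^^ n) u = u"
proof -
  obtain a b where u: "u = (a, b)"
    by fastforce
  obtain x y where xy: "one_plus_i_pow n = (x, y)"
    by fastforce
  have x: "[x = 1] (mod int p)" and y: "[y = 0] (mod int p)"
    using assms(1) xy by (simp_all add: subadd_M_pow_cong_one_def)
  have "[x * a - y * b = 1 * a - 0 * b] (mod int p)" "[y * a + x * b = 0 * a + 1 * b] (mod int p)"
    by (intro cong_diff cong_add cong_mult x y cong_refl)+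
  then show ?thesis
    using assms(2) funpow_subadd_step[of a b p n] u xy by (simp add: verts_def cong_def)
qed

abbreviation vertex_period :: "nat \<Rightarrow> int \<times> int \<Rightarrow> nat" where
  "vertex_period p u \<equiv> funpow_dist1 (subadd_step p) u u"

lemma directed_cycle_length:
  assumes "directed_cycle p cs"
  shows "length cs = vertex_period p (cs ! 0)"
  using assms fun_cycle_length by (auto simp: directed_cycle_iff_fun_cycle)

lemma directed_cycle_of_orbit:
  assumes "u \<in> verts p" and "u \<in> orbit (subadd_step p) u"
  shows "\<exists>cs. directed_cycle p cs \<and> length cs = vertex_period p u"
proof -
  let ?cs = "map (\<lambda>j. (subadd_step p ^^ j) u) [0..<vertex_period p u]"
  have "directed_cycle p ?cs"
    unfolding directed_cycle_iff_fun_cycle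
    using fun_cycle_orbit[OF assms(2)] funpow_subadd_step_in_verts[OF assms(1)] by auto
  then show ?thesis
    by (intro exI[of _ ?cs]) simp
qed

section \<open>Primes \<open>p \<equiv> 3 (mod 4)\<close>\<close>

lemma vertex_period_origin: "vertex_period p (0, 0) = 1"
  by (simp add: subadd_step_def funpow_dist_0)

lemma prime_dvd_norm_if_kernel:
  fixes q x y a b :: int
  assumes "prime q" and "q dvd x * a - y * b" and "q dvd y * a + x * b"
    and "\<not> (q dvd a \<and> q dvd b)"
  shows "q dvd x ^ 2 + y ^ 2"
proof -
  have "(x ^ 2 + y ^ 2) * a = x * (x * a - y * b) + y * (y * a + x * b)"
    and "(x ^ 2 + y ^ 2) * b = x * (y * a + x * b) - y * (x * a - y * b)"
    by (simp_all add: algebra_simps power2_eq_square)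
  then have "q dvd (x ^ 2 + y ^ 2) * a" and "q dvd (x ^ 2 + y ^ 2) * b"
    using assms(2,3) by simp_all
  then show ?thesis
    using assms(1,4) by (meson prime_dvd_mult_iff)
qed

lemma subadd_M_pow_cong_one_if_fixed:
  assumes "prime p" and "p mod 4 = 3"
    and "(a, b) \<in> verts p" and "(a, b) \<noteq> (0, 0)"
    and "(subadd_step p ^^ n) (a, b) = (a, b)"
  shows "subadd_M_pow_cong_one p n"
proof -
  obtain x y where xy: "one_plus_i_pow n = (x, y)"
    by fastforce
  have range: "0 \<le> a" "a < int p" "0 \<le> b" "b < int p"
    using assms(3) by (auto simp: verts_def)
  have "[x * a - y * b = a] (mod int p)" and "[y * a + x * b = b] (mod int p)"
    using assms(5) funpow_subadd_step[OF assms(3), of n] xy range by (auto simp: cong_def)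
  then have "int p dvd (x - 1) * a - y * b" and "int p dvd y * a + (x - 1) * b"
    by (simp_all add: cong_iff_dvd_diff algebra_simps)
  moreover have "\<not> (int p dvd a \<and> int p dvd b)"
  proof
    assume "int p dvd a \<and> int p dvd b"
    then have "a mod int p = 0" and "b mod int p = 0"
      by simp_all
    then show False
      using range assms(4) by simp
  qed
  moreover have "prime (int p)"
    using assms(1) by simp
  ultimately have "int p dvd (x - 1) ^ 2 + y ^ 2"
    using prime_dvd_norm_if_kernel by blast
  then have "int p dvd y" and "int p dvd x - 1"
    using prime_dvd_sum_of_squares[OF assms(1,2), of "x - 1" y]
      prime_dvd_sum_of_squares[OF assms(1,2), of y "x - 1"] by (simp_all only: add.commute)
  then show ?thesis
    unfolding subadd_M_pow_cong_one_def xy by (simp add: cong_iff_dvd_diff)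
qed

lemma vertex_period_eq_subadd_order:
  assumes "prime p" and "p mod 4 = 3" and "u \<in> verts p" and "u \<noteq> (0, 0)"
  shows "vertex_period p u = subadd_order p"
proof (rule antisym)
  have "odd p"
    using assms(2) by presburger
  note order = subadd_order_works[OF assms(1) \<open>odd p\<close>]
  have "(subadd_step p ^^ subadd_order p) u = u"
    using funpow_subadd_step_fixes_verts[OF order(2) assms(3)] .
  then have orb: "u \<in> orbit (subadd_step p) u"
    using order(1) by (rule funpow_fixed_in_orbit)
  show "vertex_period p u \<le> subadd_order p"
    using funpow_dist1_le_self[OF \<open>(subadd_step p ^^ subadd_order p) u = u\<close> order(1) orb] .
  obtain a b where u: "u = (a, b)"
    by fastforce
  have "subadd_M_pow_cong_one p (vertex_period p u)"
    using subadd_M_pow_cong_one_if_fixed[OF assms(1,2)] funpow_dist1_prop[OF orb] assms(3,4)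
    unfolding u by blast
  then show "subadd_order p \<le> vertex_period p u"
    by (rule subadd_order_le[rotated]) simp
qed

lemma no_secondary_cycle:
  assumes "prime p" and "p mod 4 = 3"
  shows "\<not> secondary_cycle p cs"
proof
  assume "secondary_cycle p cs"
  then have cyc: "directed_cycle p cs" and "length cs \<noteq> subadd_order p" and "length cs \<noteq> 1"
    unfolding secondary_cycle_def primary_cycle_def by auto
  moreover have "cs ! 0 \<in> verts p"
    using cyc unfolding directed_cycle_def by auto
  ultimately show False
    using directed_cycle_length[OF cyc] vertex_period_origin[of p]
      vertex_period_eq_subadd_order[OF assms] by metis
qed

section \<open>Primes \<open>p \<equiv> 5 (mod 8)\<close>\<close>

lemma funpow_subadd_step_eigenvector:
  assumes "[c ^ 2 = -1] (mod int p)" and "1 < p"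
  shows "(subadd_step p ^^ n) (1, (-c) mod int p) = ((1 + c) ^ n mod int p, (- c * (1 + c) ^ n) mod int p)"
proof -
  obtain x y where xy: "one_plus_i_pow n = (x, y)"
    by fastforce
  have eigen: "[x + c * y = (1 + c) ^ n] (mod int p)"
    using one_plus_i_pow_eigenvalue[OF assms(1), of n] xy by simp
  have reduce: "[(-c) mod int p = -c] (mod int p)"
    by (simp add: cong_def)
  have "[x * 1 - y * ((-c) mod int p) = x * 1 - y * (-c)] (mod int p)"
    by (intro cong_diff cong_mult cong_refl reduce)
  also have "x * 1 - y * (-c) = x + c * y"
    by simp
  also note eigen
  finally have first: "[x * 1 - y * ((-c) mod int p) = (1 + c) ^ n] (mod int p)" .
  have "[y * 1 + x * ((-c) mod int p) = y * 1 + x * (-c)] (mod int p)"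
    by (intro cong_add cong_mult cong_refl reduce)
  also have "y * 1 + x * (-c) = - c * (x + c * y) + y * (c ^ 2 + 1)"
    by (simp add: algebra_simps power2_eq_square)
  also have "[\<dots> = - c * (1 + c) ^ n + y * 0] (mod int p)"
    using eigen assms(1) by (intro cong_add cong_mult cong_refl) (simp_all add: cong_iff_dvd_diff)
  finally have second: "[y * 1 + x * ((-c) mod int p) = - c * (1 + c) ^ n] (mod int p)"
    by simp
  have "(1, (-c) mod int p) \<in> verts p"
    using assms(2) by (simp add: verts_def)
  from funpow_subadd_step[OF this, of n] show ?thesis
    using first second xy by (simp add: cong_def)
qed

lemma eigenvector_fixed_iff:
  assumes "[c ^ 2 = -1] (mod int p)" and "1 < p"
  shows "(subadd_step p ^^ n) (1, (-c) mod int p) = (1, (-c) mod int p) \<longleftrightarrow>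
    [(1 + c) ^ n = 1] (mod int p)"
proof
  assume "(subadd_step p ^^ n) (1, (-c) mod int p) = (1, (-c) mod int p)"
  then have "(1 + c) ^ n mod int p = 1"
    using funpow_subadd_step_eigenvector[OF assms] by simp
  then show "[(1 + c) ^ n = 1] (mod int p)"
    using assms(2) by (simp add: cong_def)
next
  assume one: "[(1 + c) ^ n = 1] (mod int p)"
  then have "[- c * (1 + c) ^ n = - c * 1] (mod int p)"
    by (intro cong_mult cong_refl)
  then show "(subadd_step p ^^ n) (1, (-c) mod int p) = (1, (-c) mod int p)"
    using one funpow_subadd_step_eigenvector[OF assms] assms(2) by (simp add: cong_def)
qed

lemma exists_secondary_cycle:
  assumes "prime p" and "p mod 8 = 5"
  shows "\<exists>cs. secondary_cycle p cs"
proof -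
  obtain c where c: "[c ^ 2 = -1] (mod int p)"
    and plus: "[(1 + c) ^ ((p - 1) div 2) = 1] (mod int p)"
    and minus: "[(1 - c) ^ ((p - 1) div 2) = -1] (mod int p)"
    using exists_sqrt_minus_one_with_opposite_powers[OF assms] .
  have "2 < p" and "odd p"
    using assms(2) by presburger+
  define v where "v = (1 :: int, (-c) mod int p)"
  have v: "v \<in> verts p"
    using \<open>2 < p\<close> by (simp add: v_def verts_def)
  have half: "(subadd_step p ^^ ((p - 1) div 2)) v = v"
    unfolding v_def using eigenvector_fixed_iff[OF c] \<open>2 < p\<close> plus by simp
  moreover have "0 < (p - 1) div 2"
    using \<open>2 < p\<close> by simp
  ultimately have orb: "v \<in> orbit (subadd_step p) v"
    by (rule funpow_fixed_in_orbit)
  have "vertex_period p v \<noteq> 1"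
  proof
    assume "vertex_period p v = 1"
    then have "[1 + c = 1 + 0] (mod int p)"
      using funpow_dist1_prop[OF orb] eigenvector_fixed_iff[OF c, of 1] \<open>2 < p\<close>
      unfolding v_def by simp
    then show False
      using sqrt_minus_one_not_cong(1)[OF c \<open>2 < p\<close>] by (simp only: cong_add_lcancel)
  qed
  moreover have "vertex_period p v \<noteq> subadd_order p"
  proof
    assume "vertex_period p v = subadd_order p"
    then have "subadd_order p dvd (p - 1) div 2"
      using funpow_dist1_dvd[OF half] by simp
    moreover have "(subadd_step p ^^ subadd_order p) (1, (- (- c)) mod int p) = (1, (- (- c)) mod int p)"
      using funpow_subadd_step_fixes_verts[OF subadd_order_works(2)[OF assms(1) \<open>odd p\<close>]] \<open>2 < p\<close>
      by (simp add: verts_def)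
    ultimately have "(subadd_step p ^^ ((p - 1) div 2)) (1, (- (- c)) mod int p) = (1, (- (- c)) mod int p)"
      by (rule funpow_fixed_dvd[rotated])
    then have "[(1 - c) ^ ((p - 1) div 2) = 1] (mod int p)"
      using eigenvector_fixed_iff[of "- c" p] c \<open>2 < p\<close> by simp
    then show False
      using minus one_not_cong_minus_one[OF \<open>2 < p\<close>] by (metis cong_sym cong_trans)
  qed
  moreover obtain cs where "directed_cycle p cs" and "length cs = vertex_period p v"
    using directed_cycle_of_orbit[OF v orb] by blast
  ultimately show ?thesis
    unfolding secondary_cycle_def primary_cycle_def by auto
qed

theorem theorem7p4:
  fixes p :: nat
  assumes "prime p" and "odd p"
  shows "(p mod 8 = 3 \<or> p mod 8 = 7 \<longrightarrow> \<not> (\<exists>cs. secondary_cycle p cs))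
       \<and> (p mod 8 = 5 \<longrightarrow> (\<exists>cs. secondary_cycle p cs))"
proof (intro conjI impI)
  assume "p mod 8 = 3 \<or> p mod 8 = 7"
  then have "p mod 4 = 3"
    by presburger
  then show "\<not> (\<exists>cs. secondary_cycle p cs)"
    using no_secondary_cycle[OF assms(1)] by blast
next
  assume "p mod 8 = 5"
  then show "\<exists>cs. secondary_cycle p cs"
    by (rule exists_secondary_cycle[OF assms(1)])
qed

end
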